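(* Let $G=(V,E)$ be a finite simple undirected graph and let $W\subseteq V$, $|W|\ge 2$, be a clique of $G$. Then \[ F_W:=\{x\in STAB(G)\mid x_W=1\}\subseteq STAB(G\mid W)\subseteq STAB(G). \]
   Context: For a graph $G=(V,E)$, $\mathcal S(G)\subseteq\{0,1\}^V$ is the set of characteristic vectors of stable sets of $G$, and $STAB(G)=\mathrm{conv}\,\mathcal S(G)$. For $W\subseteq V$ and $x\in\mathbb R^V$, $x_W=\sum_{v\in W}x_v$. $N(v)$ denotes the neighborhood of $v$ in $G$. The clique projection of a clique $W$ ($|W|\ge 2$) is the graph $G\mid W=(V,E\mid W)$ with $E\mid W=E\cup\{uv\notin E \mid u\neq v,\ W\subseteq N(u)\cup N(v)\}$. *)

theory Defs
  imports "HOL-Analysis.Analysis"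
begin

definition simple_graph :: "'a set \<Rightarrow> 'a set set \<Rightarrow> bool" where
  "simple_graph V E \<longleftrightarrow> finite V \<and> (\<forall>e\<in>E. e \<subseteq> V \<and> card e = 2)"

definition neighborhood :: "'a set set \<Rightarrow> 'a \<Rightarrow> 'a set" where
  "neighborhood E v = {u. {u, v} \<in> E}"

definition is_clique :: "'a set \<Rightarrow> 'a set set \<Rightarrow> 'a set \<Rightarrow> bool" where
  "is_clique V E W \<longleftrightarrow> W \<subseteq> V \<and> (\<forall>u\<in>W. \<forall>v\<in>W. u \<noteq> v \<longrightarrow> {u, v} \<in> E)"

definition stable_set :: "'a set \<Rightarrow> 'a set set \<Rightarrow> 'a set \<Rightarrow> bool" where
  "stable_set V E S \<longleftrightarrow> S \<subseteq> V \<and> (\<forall>u\<in>S. \<forall>v\<in>S. {u, v} \<notin> E)"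

text \<open>Vectors in R^V are represented as functions 'a => real vanishing outside V;
  characteristic vectors of stable sets.\<close>
definition stab_vectors :: "'a set \<Rightarrow> 'a set set \<Rightarrow> ('a \<Rightarrow> real) set" where
  "stab_vectors V E = {indicator S | S. stable_set V E S}"

text \<open>Convex hull of a set of functions 'a => real (the function space is not a
  real_vector instance in the library), written out as the set of finite convex combinations.\<close>
definition conv_fun :: "('a \<Rightarrow> real) set \<Rightarrow> ('a \<Rightarrow> real) set" where
  "conv_fun P = {x. \<exists>F c. finite F \<and> F \<subseteq> P \<and> (\<forall>p\<in>F. c p \<ge> 0) \<and> (\<Sum>p\<in>F. c p) = 1
      \<and> x = (\<lambda>v. \<Sum>p\<in>F. c p * p v)}"

definition STAB :: "'a set \<Rightarrow> 'a set set \<Rightarrow> ('a \<Rightarrow> real) set" where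
  "STAB V E = conv_fun (stab_vectors V E)"

definition xsum :: "('a \<Rightarrow> real) \<Rightarrow> 'a set \<Rightarrow> real" where
  "xsum x W = (\<Sum>v\<in>W. x v)"

definition clique_proj :: "'a set \<Rightarrow> 'a set set \<Rightarrow> 'a set \<Rightarrow> 'a set set" where
  "clique_proj V E W = E \<union> {{u, v} | u v. u \<in> V \<and> v \<in> V \<and> u \<noteq> v \<and> {u, v} \<notin> E \<and>
      W \<subseteq> neighborhood E u \<union> neighborhood E v}"

end

theory Submission
  imports Defs
begin

text \<open>Every stable set meets the clique W at most once, so x_W \<le> 1 is valid for STAB(G) and
  F_W is a face. A point of that face is a convex combination of characteristic vectors of stable
  sets that meet W. Such a set S remains stable in G | W: a new edge uv with u, v \<in> S would have
  the vertex w \<in> W \<inter> S adjacent to u or v in G. Conversely G | W has more edges than G, so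
  STAB(G | W) \<subseteq> STAB(G).\<close>

lemma conv_fun_mono: "P \<subseteq> Q \<Longrightarrow> conv_fun P \<subseteq> conv_fun Q"
  unfolding conv_fun_def by blast

lemma xsum_convex_combination:
  "xsum (\<lambda>v. \<Sum>p\<in>F. c p * p v) W = (\<Sum>p\<in>F. c p * xsum p W)"
  unfolding xsum_def by (simp only: sum_distrib_left) (rule sum.swap)

lemma conv_fun_face:
  assumes valid: "\<And>p. p \<in> P \<Longrightarrow> xsum p W \<le> 1"
    and x: "x \<in> conv_fun P" "xsum x W = 1"
  shows "x \<in> conv_fun {p \<in> P. xsum p W = 1}"
proof -
  obtain F c where F: "finite F" "F \<subseteq> P" "\<forall>p\<in>F. c p \<ge> 0" "(\<Sum>p\<in>F. c p) = 1"
    and x_eq: "x = (\<lambda>v. \<Sum>p\<in>F. c p * p v)"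
    using x(1) unfolding conv_fun_def by blast
  \<comment> \<open>The slacks c p * (1 - p_W) are nonnegative and sum to 1 - x_W = 0, so they all vanish.\<close>
  have slack_nonneg: "0 \<le> c p * (1 - xsum p W)" if "p \<in> F" for p
    using that F(2,3) valid by auto
  have "(\<Sum>p\<in>F. c p * (1 - xsum p W)) = (\<Sum>p\<in>F. c p) - (\<Sum>p\<in>F. c p * xsum p W)"
    by (simp add: right_diff_distrib sum_subtractf)
  also have "\<dots> = 1 - xsum x W"
    unfolding x_eq xsum_convex_combination F(4) ..
  also have "\<dots> = 0" using x(2) by simp
  finally have slack_zero: "\<forall>p\<in>F. c p * (1 - xsum p W) = 0"
    using sum_nonneg_eq_0_iff[OF F(1) slack_nonneg] by simp
  define F' where "F' = {p \<in> F. c p \<noteq> 0}"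
  have "F' \<subseteq> F" unfolding F'_def by auto
  have "F' \<subseteq> {p \<in> P. xsum p W = 1}"
    using slack_zero F(2) unfolding F'_def by auto
  moreover have "(\<Sum>p\<in>F'. c p) = 1"
    using F(4) sum.mono_neutral_left[OF F(1) \<open>F' \<subseteq> F\<close>, of c] by (auto simp: F'_def)
  moreover have "x = (\<lambda>v. \<Sum>p\<in>F'. c p * p v)"
    unfolding x_eq
    by (rule ext, rule sum.mono_neutral_right[OF F(1) \<open>F' \<subseteq> F\<close>]) (auto simp: F'_def)
  moreover have "finite F'" using \<open>F' \<subseteq> F\<close> F(1) by (rule finite_subset)
  moreover have "\<forall>p\<in>F'. c p \<ge> 0" using F(3) \<open>F' \<subseteq> F\<close> by blast
  ultimately show ?thesis
    unfolding conv_fun_def by blast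
qed

lemma STAB_antimono: "E \<subseteq> E' \<Longrightarrow> STAB V E' \<subseteq> STAB V E"
  unfolding STAB_def stab_vectors_def stable_set_def
  by (rule conv_fun_mono) blast

lemma card_stable_inter_clique_le_1:
  assumes "is_clique V E W" "stable_set V E S" "finite W"
  shows "card (W \<inter> S) \<le> 1"
proof -
  have "\<forall>a\<in>W \<inter> S. \<forall>b\<in>W \<inter> S. a = b"
    using assms(1,2) unfolding is_clique_def stable_set_def by blast
  then show ?thesis using card_le_Suc0_iff_eq[of "W \<inter> S"] assms(3) by simp
qed

lemma xsum_indicator: "finite W \<Longrightarrow> xsum (indicator S) W = real (card (W \<inter> S))"
  unfolding xsum_def by (simp add: indicator_def sum.If_cases Int_def)

lemma stable_set_clique_proj:
  assumes S: "stable_set V E S" and w: "w \<in> W" "w \<in> S"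
  shows "stable_set V (clique_proj V E W) S"
  unfolding stable_set_def
proof (intro conjI ballI)
  show "S \<subseteq> V" using S unfolding stable_set_def by auto
  fix u v assume uv: "u \<in> S" "v \<in> S"
  have not_added: "{u, v} \<noteq> {u', v'}" if "W \<subseteq> neighborhood E u' \<union> neighborhood E v'" for u' v'
  proof
    assume "{u, v} = {u', v'}"
    then have "u' \<in> S" "v' \<in> S" using uv by (auto simp: doubleton_eq_iff)
    moreover have "{w, u'} \<in> E \<or> {w, v'} \<in> E"
      using that w(1) unfolding neighborhood_def by blast
    ultimately show False using S w(2) unfolding stable_set_def by blast
  qed
  have "{u, v} \<notin> E" using S uv unfolding stable_set_def by blast
  then show "{u, v} \<notin> clique_proj V E W"
    unfolding clique_proj_def using not_added by auto
qed

lemma stab_vector_xsum_le_1: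
  assumes "is_clique V E W" "finite W" "p \<in> stab_vectors V E"
  shows "xsum p W \<le> 1"
proof -
  obtain S where S: "p = indicator S" "stable_set V E S"
    using assms(3) unfolding stab_vectors_def by blast
  have "card (W \<inter> S) \<le> 1"
    using assms(1) S(2) assms(2) by (rule card_stable_inter_clique_le_1)
  then show ?thesis
    unfolding S(1) xsum_indicator[OF assms(2)] by simp
qed

lemma stab_vector_clique_proj:
  assumes "finite W" "p \<in> stab_vectors V E" "xsum p W = 1"
  shows "p \<in> stab_vectors V (clique_proj V E W)"
proof -
  obtain S where S: "p = indicator S" "stable_set V E S"
    using assms(2) unfolding stab_vectors_def by blast
  have "card (W \<inter> S) = 1"
    using assms(3) unfolding S(1) xsum_indicator[OF assms(1)] by simp
  then obtain w where "w \<in> W" "w \<in> S"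
    by (metis card_1_singletonE IntD1 IntD2 insertI1)
  then have "stable_set V (clique_proj V E W) S"
    by (rule stable_set_clique_proj[OF S(2)])
  then show ?thesis
    unfolding stab_vectors_def S(1) by (intro CollectI exI[of _ S]) simp
qed

theorem lemma1:
  fixes V :: "'a set" and E :: "'a set set" and W :: "'a set"
  assumes "simple_graph V E"
    and "is_clique V E W"
    and "card W \<ge> 2"
  shows "{x \<in> STAB V E. xsum x W = 1} \<subseteq> STAB V (clique_proj V E W)
     \<and> STAB V (clique_proj V E W) \<subseteq> STAB V E"
proof
  have "finite W"
    using assms(1,2) unfolding simple_graph_def is_clique_def by (auto intro: finite_subset)
  have "{x \<in> STAB V E. xsum x W = 1} \<subseteq> conv_fun {p \<in> stab_vectors V E. xsum p W = 1}"
    using conv_fun_face stab_vector_xsum_le_1[OF assms(2) \<open>finite W\<close>] unfolding STAB_def by blast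
  also have "\<dots> \<subseteq> STAB V (clique_proj V E W)"
    unfolding STAB_def
    by (rule conv_fun_mono) (use stab_vector_clique_proj[OF \<open>finite W\<close>] in blast)
  finally show "{x \<in> STAB V E. xsum x W = 1} \<subseteq> STAB V (clique_proj V E W)" .
  show "STAB V (clique_proj V E W) \<subseteq> STAB V E"
    by (rule STAB_antimono) (auto simp: clique_proj_def)
qed

end
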